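(* Let $d>0$, let $\ell$ be a certified lower bound for $A^\top x\le u$ with certificate matrix $\Lambda$, and suppose $f(d,\ell)=1$. Let $i\in\arg\max_{h\in\{1,\dots,m\}}(a_h^\top y(d,\ell)-u_h)$, and define $\hat\lambda_i:=\gamma_i(d,\ell)Dt(d,\ell)-DA^\top B(d)^{-1}a_i$ and $\tilde\lambda_i:=\Lambda\hat\lambda_i^-+\hat\lambda_i^+$. If $\gamma_i(d,\ell)<\tau(A,u)$, then $\bar\lambda_i:=\tilde\lambda_i+e_i$ satisfies $A\bar\lambda_i=0$, $\bar\lambda_i\ge0$, $u^\top\bar\lambda_i<0$.
   Context: Standing assumption: $A=[a_1|\cdots|a_m]\in\mathbb{R}^{n\times m}$ has columns of unit Euclidean norm and $\{A\lambda:\lambda\ge0\}=\mathbb{R}^n$; $u\in\mathbb{R}^m$. $D=\mathrm{diag}(d)$; $r(\ell)=\tfrac12(u+\ell)$, $v(\ell)=\tfrac12(u-\ell)$, $B(d)=ADA^\top$, $y(d,\ell)=B(d)^{-1}ADr(\ell)$, $t(d,\ell)=A^\top y(d,\ell)-r(\ell)$, $f(d,\ell)=v(\ell)^\top Dv(\ell)-t(d,\ell)^\top Dt(d,\ell)$, $\gamma_i(d,\ell)=\sqrt{f(d,\ell)a_i^\top B(d)^{-1}a_i}$ when $f(d,\ell)>0$. $\ell$ is a certified lower bound with certificate matrix $\Lambda$ if $A\Lambda=-A$, $\Lambda\ge0$, $-\Lambda^\top u\ge\ell$. $\tau(A,u):=|z^*|$ with $z^*:=\max_{x}\min_{i}(u_i-a_i^\top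 x)$. $w^\pm$ are positive/negative parts. *)

theory Defs
  imports "HOL-Analysis.Analysis"
begin

text \<open>A is an n x m real matrix (type real^'m^'n); its columns a_i = column i A.
  Vectors in R^m have type real^'m, vectors in R^n type real^'n.\<close>

definition diagm :: "real^'m \<Rightarrow> real^'m^'m" where
  "diagm d = (\<chi> i j. if i = j then d $ i else 0)"

definition rvec :: "real^'m \<Rightarrow> real^'m \<Rightarrow> real^'m" where
  "rvec u l = (1/2) *\<^sub>R (u + l)"

definition vvec :: "real^'m \<Rightarrow> real^'m \<Rightarrow> real^'m" where
  "vvec u l = (1/2) *\<^sub>R (u - l)"

definition Bmat :: "real^'m^'n \<Rightarrow> real^'m \<Rightarrow> real^'n^'n" where
  "Bmat A d = A ** diagm d ** transpose A"

definition yvec :: "real^'m^'n \<Rightarrow> real^'m \<Rightarrow> real^'m \<Rightarrow> real^'m \<Rightarrow> real^'n" where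
  "yvec A u d l = matrix_inv (Bmat A d) *v ((A ** diagm d) *v rvec u l)"

definition tvec :: "real^'m^'n \<Rightarrow> real^'m \<Rightarrow> real^'m \<Rightarrow> real^'m \<Rightarrow> real^'m" where
  "tvec A u d l = transpose A *v yvec A u d l - rvec u l"

definition fval :: "real^'m^'n \<Rightarrow> real^'m \<Rightarrow> real^'m \<Rightarrow> real^'m \<Rightarrow> real" where
  "fval A u d l = vvec u l \<bullet> (diagm d *v vvec u l) - tvec A u d l \<bullet> (diagm d *v tvec A u d l)"

text \<open>gamma_i(d,l); only meaningful when fval > 0 (as in the paper).\<close>
definition gammai :: "real^'m^'n \<Rightarrow> real^'m \<Rightarrow> real^'m \<Rightarrow> real^'m \<Rightarrow> 'm \<Rightarrow> real" where
  "gammai A u d l i = sqrt (fval A u d l * (column i A \<bullet> (matrix_inv (Bmat A d) *v column i A)))"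

definition certified_lb :: "real^'m^'n \<Rightarrow> real^'m \<Rightarrow> real^'m \<Rightarrow> real^'m^'m \<Rightarrow> bool" where
  "certified_lb A u l Lam \<longleftrightarrow> A ** Lam = - A \<and> (\<forall>i j. Lam $ i $ j \<ge> 0)
     \<and> (\<forall>i. - ((transpose Lam *v u) $ i) \<ge> l $ i)"

definition zstar :: "real^'m^'n \<Rightarrow> real^'m \<Rightarrow> real" where
  "zstar A u = (SUP x. Min (range (\<lambda>i. u $ i - column i A \<bullet> x)))"

definition tau :: "real^'m^'n \<Rightarrow> real^'m \<Rightarrow> real" where
  "tau A u = \<bar>zstar A u\<bar>"

definition pospart :: "real^'m \<Rightarrow> real^'m" where
  "pospart w = (\<chi> j. max (w $ j) 0)"

definition negpart :: "real^'m \<Rightarrow> real^'m" where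
  "negpart w = (\<chi> j. max (- (w $ j)) 0)"

end

theory Submission
  imports Defs
begin

text \<open>Every point p with l \<le> A^T p \<le> u, in particular every feasible point (l being a
  certified lower bound), lies in the ellipsoid  sum_j d_j (a_j^T (p - y))^2 \<le> f(d,l)  centred at
  y = y(d,l), whose half-width in direction a_i is gamma_i (Cauchy-Schwarz for the inner product
  given by B(d)). Hence no ball of radius larger than gamma_i fits into the feasible region, so
  gamma_i < tau forces z* < 0 and then a_i^T y - u_i \<ge> -z* > gamma_i.

  On the dual side A lambda_hat_i = -a_i because A D t = 0, so lambda_bar_i lies in the kernel of A,
  and the certificate bounds u^T lambda_bar_i by  sum_j (r_j lambda_hat_j + v_j |lambda_hat_j|) + u_i.
  Estimating v_j |lambda_hat_j| by AM-GM with weight gamma_i d_j and using f(d,l) = 1 collapses this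
  bound to gamma_i - (a_i^T y - u_i), which is negative by the first part.\<close>

lemma transpose_mult_vec_nth: "(transpose A *v z) $ j = column j A \<bullet> (z::real^'n)"
  by (simp add: matrix_vector_mult_def transpose_def column_def inner_vec_def mult.commute
      del: transpose_matrix_vector)

lemma diagm_mult_vec_nth: "(diagm d *v x) $ j = d $ j * x $ j"
proof -
  have "(diagm d *v x) $ j = (\<Sum>k\<in>UNIV. (if j = k then d $ j else 0) * x $ k)"
    unfolding diagm_def matrix_vector_mult_def by simp
  also have "\<dots> = (\<Sum>k\<in>UNIV. if k = j then d $ j * x $ j else 0)"
    by (rule sum.cong) auto
  finally show ?thesis by simp
qed

lemma inner_matrix_vector_mult:
  "(A *v x) \<bullet> (z::real^'n) = (\<Sum>j\<in>UNIV. x $ j * (column j A \<bullet> z))"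
proof -
  have "(A *v x) \<bullet> z = (\<Sum>k\<in>UNIV. \<Sum>j\<in>UNIV. A$k$j * x$j * z$k)"
    unfolding inner_vec_def matrix_vector_mult_def by (simp add: sum_distrib_right)
  also have "\<dots> = (\<Sum>j\<in>UNIV. \<Sum>k\<in>UNIV. A$k$j * x$j * z$k)"
    by (rule sum.swap)
  finally show ?thesis
    unfolding inner_vec_def column_def by (simp add: sum_distrib_left mult_ac)
qed

lemma Bmat_mult_vec: "Bmat A d *v z = A *v (diagm d *v (transpose A *v z))"
  unfolding Bmat_def by (simp only: matrix_vector_mul_assoc matrix_mul_assoc)

lemma inner_Bmat_mult_vec:
  "(Bmat A d *v z) \<bullet> w = (\<Sum>j\<in>UNIV. d $ j * (column j A \<bullet> z) * (column j A \<bullet> w))"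
  unfolding Bmat_mult_vec inner_matrix_vector_mult
  by (simp add: diagm_mult_vec_nth transpose_mult_vec_nth del: transpose_matrix_vector)

lemma fval_eq_sum:
  "fval A u d l = (\<Sum>j\<in>UNIV. d $ j * (vvec u l $ j)\<^sup>2) - (\<Sum>j\<in>UNIV. d $ j * (tvec A u d l $ j)\<^sup>2)"
  unfolding fval_def inner_vec_def diagm_mult_vec_nth by (simp add: power2_eq_square mult_ac)

lemma gammai_sq:
  assumes "0 \<le> fval A u d l" and "0 \<le> column i A \<bullet> (matrix_inv (Bmat A d) *v column i A)"
  shows "(gammai A u d l i)\<^sup>2 = fval A u d l * (column i A \<bullet> (matrix_inv (Bmat A d) *v column i A))"
  unfolding gammai_def using assms by simp

lemma mult_abs_le_scaled_squares:
  fixes a b c :: real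
  assumes "c > 0"
  shows "a * \<bar>b\<bar> \<le> (c * a\<^sup>2 + b\<^sup>2 / c) / 2"
proof -
  have "0 \<le> (c * \<bar>a\<bar> - \<bar>b\<bar>)\<^sup>2 / c" using assms by simp
  also have "\<dots> = c * a\<^sup>2 + b\<^sup>2 / c - 2 * (\<bar>a\<bar> * \<bar>b\<bar>)"
    using assms by (simp add: field_simps power2_eq_square)
  finally show ?thesis using abs_ge_self[of a] mult_right_mono[of a "\<bar>a\<bar>" "\<bar>b\<bar>"] by simp
qed

lemma pos_span_eq_0:
  fixes A :: "real^'m^'n"
  assumes pos_span: "{A *v lam | lam. \<forall>k. lam $ k \<ge> 0} = UNIV"
    and "\<forall>k. column k A \<bullet> x \<le> 0"
  shows "x = 0"
proof -
  obtain lam where lam: "x = A *v lam" "\<forall>k. lam $ k \<ge> 0"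
    using pos_span by blast
  have "x \<bullet> x = (\<Sum>j\<in>UNIV. lam $ j * (column j A \<bullet> x))"
    by (subst (1) lam(1)) (rule inner_matrix_vector_mult)
  also have "\<dots> \<le> 0"
    using lam(2) assms(2) by (intro sum_nonpos mult_nonneg_nonpos) auto
  finally show ?thesis by (metis inner_gt_zero_iff not_le)
qed

definition min_slack :: "real^'m^'n \<Rightarrow> real^'m \<Rightarrow> real^'n \<Rightarrow> real" where
  "min_slack A u x = Min (range (\<lambda>h. u $ h - column h A \<bullet> x))"

lemma zstar_eq_SUP_min_slack: "zstar A u = (SUP x. min_slack A u x)"
  unfolding zstar_def min_slack_def ..

lemma min_slack_le: "min_slack A u x \<le> u $ h - column h A \<bullet> x"
  unfolding min_slack_def by (rule Min_le) auto

lemma feasible_ball_min_slack: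
  assumes unit_cols: "\<forall>k. norm (column k A) = 1" and "norm e \<le> min_slack A u x"
  shows "column h A \<bullet> (x + e) \<le> u $ h"
proof -
  have "column h A \<bullet> e \<le> norm e"
    using norm_cauchy_schwarz[of "column h A" e] unit_cols by simp
  then show ?thesis
    using assms(2) min_slack_le[of A u x h] by (simp add: inner_add_right)
qed

lemma min_slack_le_width:
  fixes A :: "real^'m^'n"
  assumes unit_cols: "\<forall>k. norm (column k A) = 1" and "0 \<le> \<gamma>"
    and width: "\<And>p q. \<forall>h. column h A \<bullet> p \<le> u $ h \<Longrightarrow> \<forall>h. column h A \<bullet> q \<le> u $ h
                  \<Longrightarrow> column i A \<bullet> (p - q) \<le> 2 * \<gamma>"
  shows "min_slack A u x \<le> \<gamma>"
proof (rule ccontr)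
  assume "\<not> min_slack A u x \<le> \<gamma>"
  then have \<rho>: "\<gamma> < min_slack A u x" "0 \<le> min_slack A u x" using \<open>0 \<le> \<gamma>\<close> by auto
  define e where "e = min_slack A u x *\<^sub>R column i A"
  have "norm e \<le> min_slack A u x" and "norm (- e) \<le> min_slack A u x"
    unfolding e_def using \<rho>(2) unit_cols by simp_all
  then have "\<forall>h. column h A \<bullet> (x + e) \<le> u $ h" and "\<forall>h. column h A \<bullet> (x + - e) \<le> u $ h"
    using feasible_ball_min_slack[OF unit_cols] by blast+
  then have "column i A \<bullet> ((x + e) - (x + - e)) \<le> 2 * \<gamma>" by (rule width)
  moreover have "column i A \<bullet> column i A = 1"
    using unit_cols by (metis power2_norm_eq_inner power_one)
  ultimately have "2 * min_slack A u x \<le> 2 * \<gamma>"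
    unfolding inner_diff_right inner_add_right inner_minus_right e_def inner_scaleR_right by simp
  then show False using \<rho>(1) by simp
qed

lemma inner_le_inner_nonneg:
  fixes c x y :: "real^'m"
  assumes "\<forall>k. 0 \<le> c $ k" and "\<forall>k. x $ k \<le> y $ k"
  shows "c \<bullet> x \<le> c \<bullet> y"
  unfolding inner_vec_def using assms by (auto intro!: sum_mono mult_left_mono)

lemma certified_lb_le_inner:
  assumes cert: "certified_lb A u l Lam" and feas: "\<forall>k. column k A \<bullet> p \<le> u $ k"
  shows "l $ h \<le> column h A \<bullet> p"
proof -
  have Lam: "A ** Lam = - A" "\<forall>i j. 0 \<le> Lam $ i $ j" "l $ h \<le> - (transpose Lam *v u) $ h"
    using cert unfolding certified_lb_def by auto
  have "- (column h A \<bullet> p) = (transpose (- A) *v p) $ h"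
    by (simp add: transpose_mult_vec_nth column_def inner_vec_def sum_negf
        del: transpose_matrix_vector)
  also have "\<dots> = column h Lam \<bullet> (transpose A *v p)"
    by (simp only: Lam(1)[symmetric] matrix_transpose_mul matrix_vector_mul_assoc[symmetric]
        transpose_mult_vec_nth)
  also have "\<dots> \<le> column h Lam \<bullet> u"
    using Lam(2) feas
    by (intro inner_le_inner_nonneg) (simp_all add: column_def transpose_mult_vec_nth
        del: transpose_matrix_vector)
  also have "\<dots> = (transpose Lam *v u) $ h"
    by (simp only: transpose_mult_vec_nth)
  finally show ?thesis using Lam(3) by linarith
qed

lemma pospart_minus_negpart: "pospart w - negpart w = w"
  by (simp add: pospart_def negpart_def vec_eq_iff max_def)

lemma A_certificate_combination:
  assumes "A ** Lam = - A" and "A *v w = - column i A"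
  shows "A *v (Lam *v negpart w + pospart w + axis i 1) = (0::real^'n)"
proof -
  have "A *v (Lam *v negpart w) = (- A) *v negpart w"
    by (simp only: matrix_vector_mul_assoc assms(1))
  also have "\<dots> = - (A *v negpart w)"
    by (simp add: matrix_vector_mult_def sum_negf vec_eq_iff)
  finally have "A *v (Lam *v negpart w) = - (A *v negpart w)" .
  then have "A *v (Lam *v negpart w + pospart w) = A *v (pospart w - negpart w)"
    by (simp add: matrix_vector_right_distrib matrix_vector_mult_diff_distrib)
  then show ?thesis
    using assms(2)
    by (simp add: pospart_minus_negpart matrix_vector_right_distrib matrix_vector_mult_basis)
qed

lemma certificate_combination_nonneg:
  assumes "\<forall>i j. 0 \<le> Lam $ i $ j"
  shows "0 \<le> (Lam *v negpart w + pospart w + axis i (1::real)) $ k"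
proof -
  have "0 \<le> (Lam *v negpart w) $ k"
    using assms unfolding matrix_vector_mult_def negpart_def by (auto intro: sum_nonneg)
  then show ?thesis by (simp add: pospart_def axis_def)
qed

lemma inner_certificate_combination_le:
  assumes cert: "certified_lb A u l Lam"
  shows "u \<bullet> (Lam *v negpart w + pospart w)
           \<le> (\<Sum>j\<in>UNIV. rvec u l $ j * w $ j + vvec u l $ j * \<bar>w $ j\<bar>)"
proof -
  have Lam: "\<forall>j. (transpose Lam *v u) $ j \<le> - l $ j"
    using cert unfolding certified_lb_def by (simp add: le_minus_iff del: transpose_matrix_vector)
  have "u \<bullet> (Lam *v negpart w) = negpart w \<bullet> (transpose Lam *v u)"
    by (metis dot_lmul_matrix transpose_matrix_vector inner_commute)
  also have "\<dots> \<le> negpart w \<bullet> (- l)"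
    using Lam by (intro inner_le_inner_nonneg) (auto simp: negpart_def)
  finally have "u \<bullet> (Lam *v negpart w + pospart w) \<le> u \<bullet> pospart w - l \<bullet> negpart w"
    by (simp add: inner_add_right inner_commute)
  also have "\<dots> = (\<Sum>j\<in>UNIV. rvec u l $ j * w $ j + vvec u l $ j * \<bar>w $ j\<bar>)"
    unfolding inner_vec_def sum_subtractf[symmetric]
    by (intro sum.cong) (auto simp: pospart_def negpart_def rvec_def vvec_def max_def algebra_simps)
  finally show ?thesis .
qed

definition lambda_hat :: "real^'m^'n \<Rightarrow> real^'m \<Rightarrow> real^'m \<Rightarrow> real^'m \<Rightarrow> 'm \<Rightarrow> real^'m" where
  "lambda_hat A u d l i = gammai A u d l i *\<^sub>R (diagm d *v tvec A u d l)
     - (diagm d ** transpose A) *v (matrix_inv (Bmat A d) *v column i A)"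

lemma lambda_hat_nth:
  "lambda_hat A u d l i $ j = d $ j * (gammai A u d l i * tvec A u d l $ j
     - column j A \<bullet> (matrix_inv (Bmat A d) *v column i A))"
proof -
  have "(diagm d ** transpose A) *v z = diagm d *v (transpose A *v z)" for z
    by (simp only: matrix_vector_mul_assoc)
  then show ?thesis
    unfolding lambda_hat_def
    by (simp add: diagm_mult_vec_nth transpose_mult_vec_nth algebra_simps
        del: transpose_matrix_vector)
qed

context
  fixes A :: "real^'m^'n" and d :: "real^'m"
  assumes pos_span: "{A *v lam | lam. \<forall>k. lam $ k \<ge> 0} = UNIV"
    and d_pos: "\<forall>k. d $ k > 0"
begin

lemma inner_Bmat_self_eq_0_iff: "(Bmat A d *v z) \<bullet> z = 0 \<longleftrightarrow> z = 0"
proof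
  assume "(Bmat A d *v z) \<bullet> z = 0"
  then have "(\<Sum>j\<in>UNIV. d $ j * (column j A \<bullet> z)\<^sup>2) = 0"
    by (simp add: inner_Bmat_mult_vec power2_eq_square mult_ac)
  moreover have "\<forall>j. 0 \<le> d $ j * (column j A \<bullet> z)\<^sup>2"
    using d_pos by (simp add: less_imp_le)
  ultimately have "\<forall>j. d $ j * (column j A \<bullet> z)\<^sup>2 = 0"
    by (simp add: sum_nonneg_eq_0_iff)
  then have "\<forall>j. column j A \<bullet> z = 0"
    using d_pos by (metis less_irrefl mult_eq_0_iff power_eq_0_iff)
  then show "z = 0" using pos_span_eq_0[OF pos_span] by simp
qed simp

lemma Bmat_invertible: "invertible (Bmat A d)"
proof -
  have "\<forall>z. Bmat A d *v z = 0 \<longrightarrow> z = 0"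
    using inner_Bmat_self_eq_0_iff by fastforce
  then show ?thesis
    using matrix_left_invertible_ker invertible_left_inverse by blast
qed

lemma Bmat_matrix_inv_cancel: "Bmat A d *v (matrix_inv (Bmat A d) *v z) = z"
proof -
  have "Bmat A d ** matrix_inv (Bmat A d) = mat 1"
    using someI_ex[OF Bmat_invertible[unfolded invertible_def]]
    unfolding matrix_inv_def by blast
  then show ?thesis by (simp add: matrix_vector_mul_assoc)
qed

lemma Bmat_yvec: "Bmat A d *v yvec A u d l = A *v (diagm d *v rvec u l)"
  unfolding yvec_def Bmat_matrix_inv_cancel by (simp add: matrix_vector_mul_assoc)

lemma A_diagm_tvec: "A *v (diagm d *v tvec A u d l) = 0"
proof -
  have "A *v (diagm d *v tvec A u d l)
          = Bmat A d *v yvec A u d l - A *v (diagm d *v rvec u l)"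
    unfolding tvec_def Bmat_mult_vec by (simp only: matrix_vector_mult_diff_distrib)
  then show ?thesis by (simp add: Bmat_yvec)
qed

lemma tvec_orthogonal: "(\<Sum>j\<in>UNIV. d $ j * tvec A u d l $ j * (column j A \<bullet> z)) = 0"
proof -
  have "(A *v (diagm d *v tvec A u d l)) \<bullet> z = 0" by (simp add: A_diagm_tvec)
  then show ?thesis by (simp add: inner_matrix_vector_mult diagm_mult_vec_nth mult_ac)
qed

lemma sum_tvec_rvec:
  "(\<Sum>j\<in>UNIV. d $ j * tvec A u d l $ j * rvec u l $ j) = - (\<Sum>j\<in>UNIV. d $ j * (tvec A u d l $ j)\<^sup>2)"
proof -
  let ?y = "yvec A u d l" and ?t = "tvec A u d l"
  have r: "rvec u l $ j = column j A \<bullet> ?y - ?t $ j" for j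
    unfolding tvec_def by (simp add: transpose_mult_vec_nth del: transpose_matrix_vector)
  have "d $ j * ?t $ j * rvec u l $ j = d $ j * ?t $ j * (column j A \<bullet> ?y) - d $ j * (?t $ j)\<^sup>2" for j
    unfolding r by (simp add: algebra_simps power2_eq_square)
  then show ?thesis by (simp add: sum_subtractf tvec_orthogonal)
qed

lemma sum_rvec_matrix_inv_Bmat:
  "(\<Sum>j\<in>UNIV. d $ j * rvec u l $ j * (column j A \<bullet> (matrix_inv (Bmat A d) *v z)))
     = z \<bullet> yvec A u d l"
proof -
  let ?w = "matrix_inv (Bmat A d) *v z"
  have "(\<Sum>j\<in>UNIV. d $ j * rvec u l $ j * (column j A \<bullet> ?w)) = (A *v (diagm d *v rvec u l)) \<bullet> ?w"
    unfolding inner_matrix_vector_mult by (simp add: diagm_mult_vec_nth)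
  also have "\<dots> = (Bmat A d *v ?w) \<bullet> yvec A u d l"
    unfolding Bmat_yvec[symmetric] inner_Bmat_mult_vec by (simp add: mult_ac)
  finally show ?thesis unfolding Bmat_matrix_inv_cancel .
qed

lemma feasible_in_ellipsoid:
  assumes lower: "\<forall>h. l $ h \<le> column h A \<bullet> p" and upper: "\<forall>h. column h A \<bullet> p \<le> u $ h"
  shows "(\<Sum>j\<in>UNIV. d $ j * (column j A \<bullet> (p - yvec A u d l))\<^sup>2) \<le> fval A u d l"
proof -
  let ?y = "yvec A u d l" and ?t = "tvec A u d l" and ?r = "rvec u l" and ?v = "vvec u l"
  have t: "?t $ j = column j A \<bullet> ?y - ?r $ j" for j
    unfolding tvec_def by (simp add: transpose_mult_vec_nth del: transpose_matrix_vector)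
  have "(column j A \<bullet> p - ?r $ j)\<^sup>2 - (?v $ j)\<^sup>2
          = (column j A \<bullet> p - u $ j) * (column j A \<bullet> p - l $ j)" for j
    by (simp add: rvec_def vvec_def algebra_simps power2_eq_square)
  moreover have "(column j A \<bullet> p - u $ j) * (column j A \<bullet> p - l $ j) \<le> 0" for j
    using lower upper by (intro mult_nonpos_nonneg) (auto simp: algebra_simps)
  ultimately have "(column j A \<bullet> p - ?r $ j)\<^sup>2 \<le> (?v $ j)\<^sup>2" for j
    by (metis diff_le_0_iff_le)
  then have le_V: "(\<Sum>j\<in>UNIV. d $ j * (column j A \<bullet> p - ?r $ j)\<^sup>2) \<le> (\<Sum>j\<in>UNIV. d $ j * (?v $ j)\<^sup>2)"
    using d_pos by (intro sum_mono mult_left_mono) (auto intro: less_imp_le)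
  have "d $ j * (column j A \<bullet> p - ?r $ j)\<^sup>2
      = d $ j * (column j A \<bullet> (p - ?y))\<^sup>2 + 2 * (d $ j * ?t $ j * (column j A \<bullet> (p - ?y)))
        + d $ j * (?t $ j)\<^sup>2" for j
    by (simp add: t inner_diff_right algebra_simps power2_eq_square)
  then have "(\<Sum>j\<in>UNIV. d $ j * (column j A \<bullet> p - ?r $ j)\<^sup>2)
      = (\<Sum>j\<in>UNIV. d $ j * (column j A \<bullet> (p - ?y))\<^sup>2)
        + 2 * (\<Sum>j\<in>UNIV. d $ j * ?t $ j * (column j A \<bullet> (p - ?y)))
        + (\<Sum>j\<in>UNIV. d $ j * (?t $ j)\<^sup>2)"
    by (simp only: sum.distrib sum_distrib_left)
  with le_V show ?thesis
    unfolding fval_eq_sum tvec_orthogonal by simp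
qed

lemma inner_matrix_inv_Bmat:
  "z \<bullet> (matrix_inv (Bmat A d) *v z)
     = (\<Sum>j\<in>UNIV. d $ j * (column j A \<bullet> (matrix_inv (Bmat A d) *v z))\<^sup>2)"
proof -
  have "z \<bullet> (matrix_inv (Bmat A d) *v z)
          = (Bmat A d *v (matrix_inv (Bmat A d) *v z)) \<bullet> (matrix_inv (Bmat A d) *v z)"
    by (simp only: Bmat_matrix_inv_cancel)
  then show ?thesis unfolding inner_Bmat_mult_vec by (simp add: power2_eq_square mult_ac)
qed

lemma inner_matrix_inv_Bmat_nonneg: "0 \<le> z \<bullet> (matrix_inv (Bmat A d) *v z)"
  unfolding inner_matrix_inv_Bmat using d_pos by (simp add: sum_nonneg less_imp_le)

text \<open>The hypothesis is needed because HOL's sqrt is odd, not zero, on negative arguments.\<close>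

lemma gammai_nonneg: "0 \<le> fval A u d l \<Longrightarrow> 0 \<le> gammai A u d l i"
  unfolding gammai_def using inner_matrix_inv_Bmat_nonneg by simp

lemma abs_inner_column_le_gammai:
  assumes "(\<Sum>j\<in>UNIV. d $ j * (column j A \<bullet> z)\<^sup>2) \<le> fval A u d l"
  shows "\<bar>column i A \<bullet> z\<bar> \<le> gammai A u d l i"
proof -
  define w where "w = matrix_inv (Bmat A d) *v column i A"
  have sqrt_d: "sqrt (d $ j) * (sqrt (d $ j) * c) = d $ j * c" for j c
    using d_pos by (simp add: less_imp_le mult.assoc[symmetric])
  have "column i A \<bullet> z = (Bmat A d *v w) \<bullet> z"
    by (simp add: w_def Bmat_matrix_inv_cancel)
  also have "\<dots> = (\<Sum>j\<in>UNIV. (sqrt (d $ j) * (column j A \<bullet> w)) * (sqrt (d $ j) * (column j A \<bullet> z)))"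
    unfolding inner_Bmat_mult_vec by (simp add: sqrt_d mult_ac)
  finally have "column i A \<bullet> z = \<dots>" .
  then have "(column i A \<bullet> z)\<^sup>2
      \<le> (\<Sum>j\<in>UNIV. d $ j * (column j A \<bullet> w)\<^sup>2) * (\<Sum>j\<in>UNIV. d $ j * (column j A \<bullet> z)\<^sup>2)"
    using Cauchy_Schwarz_ineq_sum[of "\<lambda>j. sqrt (d $ j) * (column j A \<bullet> w)"
        "\<lambda>j. sqrt (d $ j) * (column j A \<bullet> z)" UNIV] d_pos
    by (simp add: power_mult_distrib less_imp_le)
  also have "(\<Sum>j\<in>UNIV. d $ j * (column j A \<bullet> w)\<^sup>2) = column i A \<bullet> w"
    unfolding w_def by (rule inner_matrix_inv_Bmat[symmetric])
  also have "\<dots> * (\<Sum>j\<in>UNIV. d $ j * (column j A \<bullet> z)\<^sup>2) \<le> (column i A \<bullet> w) * fval A u d l"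
    unfolding w_def by (rule mult_left_mono[OF assms inner_matrix_inv_Bmat_nonneg])
  finally show ?thesis
    unfolding gammai_def w_def by (simp add: real_le_rsqrt mult.commute)
qed

lemma gammai_pos:
  assumes "column i A \<noteq> 0" and "0 < fval A u d l"
  shows "0 < gammai A u d l i"
proof -
  let ?w = "matrix_inv (Bmat A d) *v column i A"
  have "?w \<noteq> 0" using assms(1) Bmat_matrix_inv_cancel[of "column i A"] by auto
  then have "column i A \<bullet> ?w \<noteq> 0"
    using inner_Bmat_self_eq_0_iff[of ?w] by (simp add: Bmat_matrix_inv_cancel)
  with inner_matrix_inv_Bmat_nonneg[of "column i A"] have "0 < column i A \<bullet> ?w" by simp
  then show ?thesis unfolding gammai_def using assms(2) by simp
qed

lemma A_lambda_hat: "A *v lambda_hat A u d l i = - column i A"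
proof -
  have "A *v ((diagm d ** transpose A) *v z) = Bmat A d *v z" for z
    unfolding Bmat_mult_vec by (simp only: matrix_vector_mul_assoc)
  then show ?thesis
    unfolding lambda_hat_def
    by (simp add: matrix_vector_mult_diff_distrib matrix_vector_mult_scaleR A_diagm_tvec
        Bmat_matrix_inv_cancel)
qed

lemma dual_objective_lambda_hat_le:
  assumes "column i A \<noteq> 0" and f_one: "fval A u d l = 1"
  shows "(\<Sum>j\<in>UNIV. rvec u l $ j * lambda_hat A u d l i $ j + vvec u l $ j * \<bar>lambda_hat A u d l i $ j\<bar>)
           \<le> gammai A u d l i - column i A \<bullet> yvec A u d l"
proof -
  define \<gamma> where "\<gamma> = gammai A u d l i"
  define y where "y = yvec A u d l"
  define t where "t = tvec A u d l"
  define r where "r = rvec u l"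
  define v where "v = vvec u l"
  define w where "w = matrix_inv (Bmat A d) *v column i A"
  define s where "s j = column j A \<bullet> w" for j
  define T where "T = (\<Sum>j\<in>UNIV. d $ j * (t $ j)\<^sup>2)"
  have \<gamma>: "0 < \<gamma>" unfolding \<gamma>_def using gammai_pos assms by simp
  have g: "(\<Sum>j\<in>UNIV. d $ j * (s j)\<^sup>2) = \<gamma>\<^sup>2"
    unfolding \<gamma>_def s_def w_def inner_matrix_inv_Bmat[symmetric]
    using gammai_sq[of A u d l i] f_one inner_matrix_inv_Bmat_nonneg by simp
  have V: "(\<Sum>j\<in>UNIV. d $ j * (v $ j)\<^sup>2) = T + 1"
    using fval_eq_sum[of A u d l] f_one unfolding T_def t_def v_def by simp
  have tr: "(\<Sum>j\<in>UNIV. d $ j * t $ j * r $ j) = - T"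
    unfolding t_def r_def T_def by (rule sum_tvec_rvec)
  have rs: "(\<Sum>j\<in>UNIV. d $ j * r $ j * s j) = column i A \<bullet> y"
    unfolding r_def s_def w_def y_def by (rule sum_rvec_matrix_inv_Bmat)
  have ts: "(\<Sum>j\<in>UNIV. d $ j * t $ j * s j) = 0"
    unfolding s_def t_def by (rule tvec_orthogonal)
  have lh: "lambda_hat A u d l i $ j = d $ j * (\<gamma> * t $ j - s j)" for j
    unfolding lambda_hat_nth \<gamma>_def t_def s_def w_def ..
  define F where "F j = r $ j * (d $ j * (\<gamma> * t $ j - s j))
    + (\<gamma> * d $ j * (v $ j)\<^sup>2 + d $ j * (\<gamma> * t $ j - s j)\<^sup>2 / \<gamma>) / 2" for j
  have pointwise: "r $ j * lambda_hat A u d l i $ j + v $ j * \<bar>lambda_hat A u d l i $ j\<bar> \<le> F j" for j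
  proof -
    have dj: "0 < d $ j" using d_pos by simp
    have "(lambda_hat A u d l i $ j)\<^sup>2 / (\<gamma> * d $ j) = d $ j * (\<gamma> * t $ j - s j)\<^sup>2 / \<gamma>"
      unfolding lh using dj by (simp add: power2_eq_square)
    then show ?thesis
      using mult_abs_le_scaled_squares[of "\<gamma> * d $ j" "v $ j" "lambda_hat A u d l i $ j"] \<gamma> dj
      unfolding F_def lh[symmetric] by simp
  qed
  have F_expand: "F j = \<gamma> * (d $ j * t $ j * r $ j) - d $ j * r $ j * s j
      + \<gamma> / 2 * (d $ j * (v $ j)\<^sup>2) + \<gamma> / 2 * (d $ j * (t $ j)\<^sup>2) - d $ j * t $ j * s j
      + d $ j * (s j)\<^sup>2 / (2 * \<gamma>)" for j
    unfolding F_def using \<gamma> by (simp add: field_simps power2_eq_square)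
  have "(\<Sum>j\<in>UNIV. F j) = \<gamma> * (\<Sum>j\<in>UNIV. d $ j * t $ j * r $ j) - (\<Sum>j\<in>UNIV. d $ j * r $ j * s j)
      + \<gamma> / 2 * (\<Sum>j\<in>UNIV. d $ j * (v $ j)\<^sup>2) + \<gamma> / 2 * T - (\<Sum>j\<in>UNIV. d $ j * t $ j * s j)
      + (\<Sum>j\<in>UNIV. d $ j * (s j)\<^sup>2) / (2 * \<gamma>)"
    unfolding F_expand T_def
    by (simp add: sum.distrib sum_subtractf sum_distrib_left sum_divide_distrib)
  also have "\<dots> = \<gamma> * (- T) - column i A \<bullet> y + \<gamma> / 2 * (T + 1) + \<gamma> / 2 * T
      + \<gamma>\<^sup>2 / (2 * \<gamma>)"
    by (simp only: tr rs V ts g diff_zero)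
  also have "\<dots> = \<gamma> - column i A \<bullet> y"
    using \<gamma> by (simp add: field_simps power2_eq_square)
  finally have "(\<Sum>j\<in>UNIV. F j) = \<gamma> - column i A \<bullet> y" .
  moreover have "(\<Sum>j\<in>UNIV. r $ j * lambda_hat A u d l i $ j + v $ j * \<bar>lambda_hat A u d l i $ j\<bar>)
      \<le> (\<Sum>j\<in>UNIV. F j)"
    by (rule sum_mono) (rule pointwise)
  ultimately show ?thesis unfolding r_def v_def \<gamma>_def y_def by simp
qed

lemma gammai_lt_max_violation:
  assumes unit_cols: "\<forall>k. norm (column k A) = 1"
    and cert: "certified_lb A u l Lam"
    and f_nonneg: "0 \<le> fval A u d l"
    and i_argmax: "\<forall>h. column h A \<bullet> yvec A u d l - u $ h \<le> column i A \<bullet> yvec A u d l - u $ i"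
    and gamma_lt: "gammai A u d l i < tau A u"
  shows "gammai A u d l i < column i A \<bullet> yvec A u d l - u $ i"
proof -
  let ?y = "yvec A u d l" and ?\<gamma> = "gammai A u d l i"
  have near_y: "\<bar>column i A \<bullet> (p - ?y)\<bar> \<le> ?\<gamma>" if "\<forall>h. column h A \<bullet> p \<le> u $ h" for p
    using that certified_lb_le_inner[OF cert that]
    by (intro abs_inner_column_le_gammai feasible_in_ellipsoid) auto
  have width: "column i A \<bullet> (p - q) \<le> 2 * ?\<gamma>"
    if "\<forall>h. column h A \<bullet> p \<le> u $ h" and "\<forall>h. column h A \<bullet> q \<le> u $ h" for p q
    using near_y[OF that(1)] near_y[OF that(2)] by (simp add: inner_diff_right abs_le_iff)
  have \<gamma>0: "0 \<le> ?\<gamma>" using gammai_nonneg[OF f_nonneg] .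
  have slack: "min_slack A u x \<le> ?\<gamma>" for x
    using min_slack_le_width[OF unit_cols \<gamma>0 width] by blast
  then have "zstar A u \<le> ?\<gamma>"
    unfolding zstar_eq_SUP_min_slack by (intro cSUP_least) auto
  moreover have "min_slack A u ?y \<le> zstar A u"
    unfolding zstar_eq_SUP_min_slack using slack by (intro cSUP_upper bdd_aboveI2) auto
  moreover have "min_slack A u ?y = u $ i - column i A \<bullet> ?y"
    unfolding min_slack_def
  proof (rule Min_eqI)
    fix z assume "z \<in> range (\<lambda>h. u $ h - column h A \<bullet> ?y)"
    then obtain h where "z = u $ h - column h A \<bullet> ?y" by blast
    then show "u $ i - column i A \<bullet> ?y \<le> z" using i_argmax[rule_format, of h] by linarith
  qed auto
  ultimately show ?thesis using gamma_lt \<gamma>0 unfolding tau_def by linarith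
qed

end

theorem proposition4:
  fixes A :: "real^'m^'n" and u d l :: "real^'m" and Lam :: "real^'m^'m" and i :: 'm
  assumes unit_cols: "\<forall>k. norm (column k A) = 1"
    and pos_span: "{A *v lam | lam. \<forall>k. lam $ k \<ge> 0} = UNIV"
    and d_pos: "\<forall>k. d $ k > 0"
    and cert: "certified_lb A u l Lam"
    and f_one: "fval A u d l = 1"
    and i_argmax: "\<forall>h. column h A \<bullet> yvec A u d l - u $ h \<le> column i A \<bullet> yvec A u d l - u $ i"
    and gamma_lt: "gammai A u d l i < tau A u"
  shows "let lhat = gammai A u d l i *\<^sub>R (diagm d *v tvec A u d l)
                     - (diagm d ** transpose A) *v (matrix_inv (Bmat A d) *v column i A);
             ltil = Lam *v negpart lhat + pospart lhat;
             lbar = ltil + axis i 1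
         in A *v lbar = 0 \<and> (\<forall>k. lbar $ k \<ge> 0) \<and> u \<bullet> lbar < 0"
proof -
  let ?lhat = "lambda_hat A u d l i"
  let ?lbar = "Lam *v negpart ?lhat + pospart ?lhat + axis i 1"
  have Lam: "A ** Lam = - A" "\<forall>i j. 0 \<le> Lam $ i $ j"
    using cert unfolding certified_lb_def by auto
  have a_i: "column i A \<noteq> 0" using unit_cols by (metis norm_zero zero_neq_one)
  have "u \<bullet> ?lbar
      \<le> (\<Sum>j\<in>UNIV. rvec u l $ j * ?lhat $ j + vvec u l $ j * \<bar>?lhat $ j\<bar>) + u $ i"
    using inner_certificate_combination_le[OF cert] by (simp add: inner_add_right inner_axis)
  also have "\<dots> \<le> gammai A u d l i - (column i A \<bullet> yvec A u d l - u $ i)"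
    using dual_objective_lambda_hat_le[OF pos_span d_pos a_i f_one] by simp
  also have "\<dots> < 0"
    using gammai_lt_max_violation[OF pos_span d_pos unit_cols cert _ i_argmax gamma_lt] f_one by simp
  finally have "u \<bullet> ?lbar < 0" .
  moreover have "A *v ?lbar = 0"
    using A_certificate_combination[OF Lam(1) A_lambda_hat[OF pos_span d_pos]] .
  moreover have "\<forall>k. 0 \<le> ?lbar $ k"
    using certificate_combination_nonneg[OF Lam(2)] by blast
  ultimately show ?thesis unfolding Let_def lambda_hat_def[symmetric] by blast
qed

end
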